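(* For all integers $r\ge 3$ and $n\ge r+12$, \[ \log m(n,r) \le \frac{1}{n-r+1}\binom{n}{r}\log\bigl(\mathrm{e}(n-r+1)\bigr). \]
   Context: $m(n,r)$ denotes the number of matroids of rank $r$ on the ground set $[n]=\{1,\dots,n\}$. $\log$ is the logarithm to base $2$ and $\mathrm{e}$ is Euler's number. *)

theory Defs
  imports "HOL-Analysis.Analysis"
begin

definition matroid_bases :: "'a set \<Rightarrow> 'a set set \<Rightarrow> bool" where
  "matroid_bases E B \<longleftrightarrow>
     B \<noteq> {} \<and> (\<forall>X\<in>B. X \<subseteq> E) \<and>
     (\<forall>X\<in>B. \<forall>Y\<in>B. \<forall>x\<in>X - Y. \<exists>y\<in>Y - X. insert y (X - {x}) \<in> B)"

definition matroid_count :: "nat \<Rightarrow> nat \<Rightarrow> nat" where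
  "matroid_count n r =
     card {B. matroid_bases {1..n} B \<and> (\<forall>X\<in>B. card X = r)}"

end

theory Submission
  imports Defs
begin

text \<open>
  Contracting an element \<open>x\<close> sends the bases through \<open>x\<close> of a rank-\<open>r\<close> matroid on \<open>E\<close> to the
  bases of a rank-\<open>(r - 1)\<close> matroid on \<open>E - {x}\<close>, and the bases through \<open>x\<close> are exactly what
  the family of all bases looks like when projected to the \<open>r\<close>-sets containing \<open>x\<close>. Since every
  \<open>r\<close>-set contains \<open>r\<close> elements, Shearer's inequality gives
  \<open>(m(E, r) + 1)^r \<le> \<Prod>x\<in>E. (m(E - {x}, r - 1) + 1)\<close>. In logarithmic form the bound
  \<open>ln (m + 1) \<le> C(n, r) / (c + 1) \<cdot> ln (e (c + 1))\<close> with \<open>c = n - r\<close> fixed therefore passes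
  from rank \<open>r - 1\<close> to rank \<open>r\<close>, because \<open>n C(n - 1, r - 1) = r C(n, r)\<close>.

  The base case \<open>r = 3\<close> is a direct count. A rank-3 matroid is determined by its loops, its
  parallel classes and, for every line of its simplification with at least three points, the
  triples formed by the two smallest points of the line with each further point. Lines meet in
  at most one point, so there are at most \<open>C(n, 2) / 3\<close> such triples, and counting the codes
  gives \<open>ln (m(E, 3) + 1) \<le> C(n, 3) / (n - 2) \<cdot> ln (e (n - 2))\<close> for \<open>n \<ge> 15\<close>.
\<close>

section \<open>Shearer's inequality\<close>

lemma root_prod_add_ge:
  fixes a b :: "'i \<Rightarrow> real"
  assumes J: "finite J" "J \<noteq> {}"
    and a: "\<And>i. i \<in> J \<Longrightarrow> 0 \<le> a i" and b: "\<And>i. i \<in> J \<Longrightarrow> 0 \<le> b i"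
  shows "root (card J) (\<Prod>i\<in>J. a i) + root (card J) (\<Prod>i\<in>J. b i)
         \<le> root (card J) (\<Prod>i\<in>J. a i + b i)"
proof (cases "\<exists>i\<in>J. a i + b i = 0")
  case True
  then obtain i where "i \<in> J" "a i = 0" "b i = 0"
    using a b by (metis add_nonneg_eq_0_iff)
  then have "(\<Prod>i\<in>J. a i) = 0" "(\<Prod>i\<in>J. b i) = 0" "(\<Prod>i\<in>J. a i + b i) = 0"
    using J by (auto simp: prod_zero_iff intro!: bexI[of _ i])
  then show ?thesis by simp
next
  case False
  define c where "c i = a i + b i" for i
  have c: "0 < c i" if "i \<in> J" for i
    using False a[OF that] b[OF that] that unfolding c_def by fastforce
  let ?k = "card J"
  have k: "0 < ?k" using J by (simp add: card_gt_0_iff)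
  have am_gm: "root ?k (\<Prod>i\<in>J. f i / c i) \<le> (\<Sum>i\<in>J. f i / c i / ?k)"
    if "\<And>i. i \<in> J \<Longrightarrow> 0 \<le> f i" for f
    using arith_geom_mean[OF J, of "\<lambda>i. f i / c i"] that c k
    by (simp add: root_powr_inverse prod_nonneg less_imp_le)
  have split: "root ?k (\<Prod>i\<in>J. f i) = root ?k (\<Prod>i\<in>J. f i / c i) * root ?k (\<Prod>i\<in>J. c i)" for f
    unfolding real_root_mult[symmetric] prod.distrib[symmetric]
    by (intro arg_cong[where f="root ?k"] prod.cong) (use c in \<open>auto simp: less_imp_neq[symmetric]\<close>)
  have "(\<Sum>i\<in>J. a i / c i / ?k) + (\<Sum>i\<in>J. b i / c i / ?k) = (\<Sum>i\<in>J. 1 / ?k)"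
    unfolding sum.distrib[symmetric]
  proof (intro sum.cong refl)
    fix i assume "i \<in> J"
    then have "a i / c i + b i / c i = 1"
      using c by (simp add: c_def add_divide_distrib[symmetric] less_imp_neq[symmetric])
    then show "a i / c i / ?k + b i / c i / ?k = 1 / ?k"
      by (simp add: add_divide_distrib[symmetric])
  qed
  also have "\<dots> = 1" using k by simp
  finally have "root ?k (\<Prod>i\<in>J. a i / c i) + root ?k (\<Prod>i\<in>J. b i / c i) \<le> 1"
    using am_gm[of a, OF a] am_gm[of b, OF b] by linarith
  from mult_right_mono[OF this, of "root ?k (\<Prod>i\<in>J. c i)"]
  show ?thesis
    using c k by (simp add: split[of a] split[of b] distrib_right c_def prod_nonneg less_imp_le)
qed

lemma power_add_le_prod_add:
  fixes a b :: "'i \<Rightarrow> real"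
  assumes J: "finite J" "card J = r" "0 < r" and C: "0 \<le> C"
    and a: "\<And>i. i \<in> J \<Longrightarrow> 0 \<le> a i" and b: "\<And>i. i \<in> J \<Longrightarrow> 0 \<le> b i"
    and x: "0 \<le> x" "x ^ r \<le> C * (\<Prod>i\<in>J. a i)"
    and y: "0 \<le> y" "y ^ r \<le> C * (\<Prod>i\<in>J. b i)"
  shows "(x + y) ^ r \<le> C * (\<Prod>i\<in>J. a i + b i)"
proof -
  have J0: "J \<noteq> {}" using J by auto
  have "x \<le> root r C * root r (\<Prod>i\<in>J. a i)"
    using real_root_le_mono[OF J(3) x(2)] x(1) J(3) by (simp add: real_root_mult real_root_power_cancel)
  moreover have "y \<le> root r C * root r (\<Prod>i\<in>J. b i)"
    using real_root_le_mono[OF J(3) y(2)] y(1) J(3) by (simp add: real_root_mult real_root_power_cancel)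
  ultimately have "x + y \<le> root r C * (root r (\<Prod>i\<in>J. a i) + root r (\<Prod>i\<in>J. b i))"
    by (simp add: distrib_left)
  also have "\<dots> \<le> root r C * root r (\<Prod>i\<in>J. a i + b i)"
    using root_prod_add_ge[OF J(1) J0 a b] C J by (intro mult_left_mono) auto
  also have "\<dots> = root r (C * (\<Prod>i\<in>J. a i + b i))" by (simp add: real_root_mult)
  finally have "(x + y) ^ r \<le> root r (C * (\<Prod>i\<in>J. a i + b i)) ^ r"
    using x y by (intro power_mono) auto
  also have "\<dots> = C * (\<Prod>i\<in>J. a i + b i)"
    using J C a b by (intro real_root_pow_pos2) (auto intro!: mult_nonneg_nonneg prod_nonneg add_nonneg_nonneg)
  finally show ?thesis .
qed

lemma card_split_by_member:
  assumes "finite F"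
  shows "card F = card {A\<in>F. v \<notin> A} + card ((\<lambda>A. A - {v}) ` {A\<in>F. v \<in> A})"
proof -
  have "inj_on (\<lambda>A. A - {v}) {A\<in>F. v \<in> A}" by (auto simp: inj_on_def)
  moreover have "F = {A\<in>F. v \<notin> A} \<union> {A\<in>F. v \<in> A}" by auto
  ultimately show ?thesis
    using assms by (metis (no_types, lifting) card_Un_disjoint card_image disjoint_iff finite_Un mem_Collect_eq)
qed

lemma card_traces_split:
  assumes F: "finite F" and v: "v \<in> S"
  shows "card ((\<lambda>A. A \<inter> S) ` F)
       = card ((\<lambda>A. A \<inter> S) ` {A\<in>F. v \<notin> A})
         + card ((\<lambda>A. A \<inter> S) ` (\<lambda>A. A - {v}) ` {A\<in>F. v \<in> A})"
proof -
  let ?tr = "\<lambda>G. (\<lambda>A. A \<inter> S) ` G"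
  have "?tr F = ?tr {A\<in>F. v \<notin> A} \<union> ?tr {A\<in>F. v \<in> A}" by auto
  moreover have "?tr {A\<in>F. v \<notin> A} \<inter> ?tr {A\<in>F. v \<in> A} = {}" using v by auto
  moreover have "?tr {A\<in>F. v \<in> A} = insert v ` ?tr ((\<lambda>A. A - {v}) ` {A\<in>F. v \<in> A})"
    unfolding image_image by (intro image_cong) (use v in auto)
  moreover have "inj_on (insert v) (?tr ((\<lambda>A. A - {v}) ` {A\<in>F. v \<in> A}))"
    by (auto simp: inj_on_def)
  ultimately show ?thesis using F by (simp add: card_Un_disjoint card_image)
qed

theorem shearer_inequality:
  fixes S :: "'i \<Rightarrow> 'a set"
  assumes "finite V" "finite I" "F \<subseteq> Pow V"
    and "\<And>v. v \<in> V \<Longrightarrow> card {i\<in>I. v \<in> S i} = r" and r: "0 < r"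
  shows "real (card F) ^ r \<le> (\<Prod>i\<in>I. real (card ((\<lambda>A. A \<inter> S i) ` F)))"
  using assms(1,3,4)
proof (induction V arbitrary: F rule: finite_induct)
  case empty
  then have "F = {} \<or> F = {{}}" by auto
  then show ?case using r by (auto simp: power_0_left)
next
  case (insert v V)
  define tr where "tr i G = real (card ((\<lambda>A. A \<inter> S i) ` G))" for i G
  define F0 where "F0 = {A\<in>F. v \<notin> A}"
  define F1 where "F1 = (\<lambda>A. A - {v}) ` {A\<in>F. v \<in> A}"
  define J where "J = {i\<in>I. v \<in> S i}"
  define C where "C = (\<Prod>i\<in>I - J. tr i F)"
  have finF: "finite F"
    using insert.prems(1) insert.hyps(1) by (meson finite_Pow_iff finite_insert rev_finite_subset)
  have cJ: "card J = r" and J: "finite J" "J \<subseteq> I"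
    using insert.prems(2) assms(2) by (auto simp: J_def)
  have prod_split: "(\<Prod>i\<in>I. f i) = C' * (\<Prod>i\<in>J. f i)" if "C' = (\<Prod>i\<in>I - J. f i)" for f C'
    using prod.subset_diff[OF J(2) assms(2)] that by simp
  have bound: "real (card G) ^ r \<le> C * (\<Prod>i\<in>J. tr i G)"
    if "G \<subseteq> Pow V" and sub: "\<And>i. i \<in> I - J \<Longrightarrow> (\<lambda>A. A \<inter> S i) ` G \<subseteq> (\<lambda>A. A \<inter> S i) ` F" for G
  proof -
    have "real (card G) ^ r \<le> (\<Prod>i\<in>I. tr i G)"
      unfolding tr_def using insert.IH[OF that(1)] insert.prems(2) by auto
    also have "\<dots> = (\<Prod>i\<in>I - J. tr i G) * (\<Prod>i\<in>J. tr i G)" by (rule prod_split) simp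
    also have "\<dots> \<le> C * (\<Prod>i\<in>J. tr i G)"
      unfolding C_def tr_def using finF sub
      by (intro mult_right_mono prod_mono) (auto intro!: card_mono prod_nonneg)
    finally show ?thesis .
  qed
  have "real (card F) ^ r = (real (card F0) + real (card F1)) ^ r"
    using card_split_by_member[OF finF, of v] unfolding F0_def F1_def by simp
  also have "\<dots> \<le> C * (\<Prod>i\<in>J. tr i F0 + tr i F1)"
  proof (rule power_add_le_prod_add[OF J(1) cJ r])
    show "real (card F0) ^ r \<le> C * (\<Prod>i\<in>J. tr i F0)"
      by (rule bound) (use insert.prems(1) in \<open>auto simp: F0_def\<close>)
    show "real (card F1) ^ r \<le> C * (\<Prod>i\<in>J. tr i F1)"
      by (rule bound) (use insert.prems(1) in \<open>auto simp: F1_def J_def\<close>)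
  qed (auto simp: C_def tr_def prod_nonneg)
  also have "\<dots> = C * (\<Prod>i\<in>J. tr i F)"
    using card_traces_split[OF finF] unfolding tr_def F0_def F1_def J_def
    by (intro arg_cong[where f="(*) C"] prod.cong) auto
  also have "\<dots> = (\<Prod>i\<in>I. tr i F)" by (rule prod_split[symmetric]) (simp add: C_def)
  finally show ?case unfolding tr_def .
qed

lemma choose_two_ge:
  assumes "3 \<le> s" shows "3 * (s - 2) \<le> s choose 2"
proof -
  obtain k where k: "s = k + 3" using assms by (metis add.commute le_iff_add)
  have "6 * (k + 1) \<le> (k + 3) * (k + 2)" by (simp add: algebra_simps)
  then have "6 * (s - 2) \<le> s * (s - 1)" using k by (simp add: numeral_eq_Suc)
  then have "3 * (s - 2) \<le> s * (s - 1) div 2" by linarith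
  then show ?thesis by (simp add: choose_two)
qed

lemma sum_lines_le_choose_two:
  assumes R: "finite R" and L: "L \<subseteq> Pow R" "\<And>l. l \<in> L \<Longrightarrow> 3 \<le> card l"
    and inter: "\<And>l l'. l \<in> L \<Longrightarrow> l' \<in> L \<Longrightarrow> l \<noteq> l' \<Longrightarrow> card (l \<inter> l') \<le> 1"
  shows "3 * (\<Sum>l\<in>L. card l - 2) \<le> card R choose 2"
proof -
  define P where "P l = {p. p \<subseteq> l \<and> card p = 2}" for l :: "'a set"
  have fin: "finite L" "\<And>l. l \<in> L \<Longrightarrow> finite l"
    using L(1) R by (auto intro: finite_subset)
  have disj: "P l \<inter> P l' = {}" if "l \<in> L" "l' \<in> L" "l \<noteq> l'" for l l'
  proof (rule ccontr)
    assume "P l \<inter> P l' \<noteq> {}"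
    then obtain p where p: "p \<subseteq> l \<inter> l'" "card p = 2" unfolding P_def by blast
    have "card p \<le> card (l \<inter> l')" using p(1) fin(2)[OF that(1)] by (intro card_mono) auto
    then show False using inter[OF that] p(2) by simp
  qed
  have "3 * (\<Sum>l\<in>L. card l - 2) = (\<Sum>l\<in>L. 3 * (card l - 2))" by (simp add: sum_distrib_left)
  also have "\<dots> \<le> (\<Sum>l\<in>L. card (P l))"
    using choose_two_ge L(2) fin(2) by (intro sum_mono) (simp add: P_def n_subsets)
  also have "\<dots> = card (\<Union>l\<in>L. P l)"
    using fin disj by (intro card_UN_disjoint[symmetric]) (auto simp: P_def)
  also have "\<dots> \<le> card {p. p \<subseteq> R \<and> card p = 2}"
    using R L(1) by (intro card_mono) (auto simp: P_def)
  also have "\<dots> = card R choose 2" using n_subsets[OF R] .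
  finally show ?thesis .
qed

lemma Min_Diff_Min:
  fixes l :: "'b::linorder set"
  assumes l: "finite l" "2 \<le> card l"
  shows "Min l \<in> l" "Min (l - {Min l}) \<in> l - {Min l}" "Min l < Min (l - {Min l})"
    and "\<And>c. c \<in> l - {Min l, Min (l - {Min l})} \<Longrightarrow> Min (l - {Min l}) < c"
proof -
  have ne: "l \<noteq> {}" "l - {Min l} \<noteq> {}"
    using l card_mono[OF finite.insertI[OF finite.emptyI], of l "Min l"] by auto
  show "Min l \<in> l" "Min (l - {Min l}) \<in> l - {Min l}"
    using Min_in[OF l(1) ne(1)] Min_in[OF _ ne(2)] l(1) by auto
  then show "Min l < Min (l - {Min l})"
    using Min_le[OF l(1), of "Min (l - {Min l})"] by auto
  show "Min (l - {Min l}) < c" if "c \<in> l - {Min l, Min (l - {Min l})}" for c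
  proof -
    have "Min (l - {Min l}) \<le> c" using that l(1) by (intro Min_le) auto
    then show ?thesis using that by auto
  qed
qed

section \<open>Matroids of a given rank and contraction\<close>

definition rank_matroids :: "'a set \<Rightarrow> nat \<Rightarrow> 'a set set set" where
  "rank_matroids E r = {B. matroid_bases E B \<and> (\<forall>X\<in>B. card X = r)}"

lemma matroid_count_eq_card: "matroid_count n r = card (rank_matroids {1..n} r)"
  unfolding matroid_count_def rank_matroids_def ..

lemma rank_matroids_subset_Pow: "rank_matroids E r \<subseteq> Pow {X. X \<subseteq> E \<and> card X = r}"
  unfolding rank_matroids_def matroid_bases_def by auto

lemma finite_rank_matroids: "finite E \<Longrightarrow> finite (rank_matroids E r)"
  by (rule finite_subset[OF rank_matroids_subset_Pow]) auto

lemma empty_notin_rank_matroids: "{} \<notin> rank_matroids E r"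
  unfolding rank_matroids_def matroid_bases_def by auto

lemma card_insert_empty_rank_matroids:
  "finite E \<Longrightarrow> card (insert {} (rank_matroids E r)) = card (rank_matroids E r) + 1"
  by (simp add: finite_rank_matroids empty_notin_rank_matroids)

lemma matroid_bases_augment:
  assumes M: "matroid_bases E B" and E: "finite E" and Z: "Z \<in> B" "I \<subseteq> Z" and X: "X \<in> B"
  shows "\<exists>W\<in>B. I \<subseteq> W \<and> W \<subseteq> I \<union> X"
  using Z
proof (induction "card (Z - (I \<union> X))" arbitrary: Z rule: less_induct)
  case less
  show ?case
  proof (cases "Z - (I \<union> X) = {}")
    case True
    then show ?thesis using less.prems by blast
  next
    case False
    then obtain p where p: "p \<in> Z" "p \<notin> I" "p \<notin> X" by blast
    then obtain y where y: "y \<in> X - Z" "insert y (Z - {p}) \<in> B"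
      using M less.prems(1) X unfolding matroid_bases_def by blast
    have "finite Z" using less.prems(1) M E unfolding matroid_bases_def by (meson finite_subset)
    then have "card (insert y (Z - {p}) - (I \<union> X)) < card (Z - (I \<union> X))"
      using p y by (intro psubset_card_mono) auto
    then show ?thesis using less.hyps y(2) less.prems(2) p by blast
  qed
qed

definition contraction :: "'a \<Rightarrow> 'a set set \<Rightarrow> 'a set set" where
  "contraction x B = (\<lambda>X. X - {x}) ` {X\<in>B. x \<in> X}"

lemma contraction_in_rank_matroids:
  assumes B: "B \<in> rank_matroids E r" and ne: "contraction x B \<noteq> {}"
  shows "contraction x B \<in> rank_matroids (E - {x}) (r - 1)"
proof -
  have M: "matroid_bases E B" and c: "\<forall>X\<in>B. card X = r"
    using B unfolding rank_matroids_def by auto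
  have exchange: "\<exists>y\<in>Y - X. insert y (X - {z}) \<in> contraction x B"
    if XY: "X \<in> contraction x B" "Y \<in> contraction x B" and z: "z \<in> X - Y" for X Y z
  proof -
    obtain X0 Y0 where X0: "X0 \<in> B" "x \<in> X0" "X = X0 - {x}" and Y0: "Y0 \<in> B" "x \<in> Y0" "Y = Y0 - {x}"
      using XY unfolding contraction_def by auto
    have "z \<in> X0 - Y0" "z \<noteq> x" using z X0 Y0 by auto
    then obtain y where y: "y \<in> Y0 - X0" "insert y (X0 - {z}) \<in> B"
      using M X0 Y0 unfolding matroid_bases_def by blast
    have "insert y (X - {z}) = insert y (X0 - {z}) - {x}" "x \<in> insert y (X0 - {z})"
      using X0 y \<open>z \<noteq> x\<close> by auto
    then have "insert y (X - {z}) \<in> contraction x B"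
      unfolding contraction_def using y(2) by blast
    moreover have "y \<in> Y - X" using y X0 Y0 by auto
    ultimately show ?thesis by blast
  qed
  have "\<forall>X\<in>contraction x B. X \<subseteq> E - {x} \<and> card X = r - 1"
    using M c unfolding contraction_def matroid_bases_def by auto
  then show ?thesis
    using ne exchange unfolding rank_matroids_def matroid_bases_def by blast
qed

lemma card_traces_le_card_rank_matroids:
  assumes E: "finite E"
  shows "card ((\<lambda>B. B \<inter> {X. x \<in> X}) ` insert {} (rank_matroids E r))
         \<le> card (rank_matroids (E - {x}) (r - 1)) + 1"
proof -
  let ?tr = "(\<lambda>B. B \<inter> {X. x \<in> X}) ` insert {} (rank_matroids E r)"
  let ?G = "insert {} (rank_matroids (E - {x}) (r - 1))"
  have "inj_on ((`) (\<lambda>X. X - {x})) ?tr"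
  proof (rule inj_onI)
    fix A1 A2 assume "A1 \<in> ?tr" "A2 \<in> ?tr" "(\<lambda>X. X - {x}) ` A1 = (\<lambda>X. X - {x}) ` A2"
    moreover have "inj_on (\<lambda>X. X - {x}) {X. x \<in> X}" by (auto simp: inj_on_def)
    ultimately show "A1 = A2" by (auto simp: inj_on_image_eq_iff)
  qed
  moreover have "(`) (\<lambda>X. X - {x}) ` ?tr \<subseteq> ?G"
  proof
    fix C assume "C \<in> (`) (\<lambda>X. X - {x}) ` ?tr"
    then obtain B where B: "B \<in> insert {} (rank_matroids E r)" "C = contraction x B"
      unfolding contraction_def by (auto simp: Int_def)
    then show "C \<in> ?G"
      using contraction_in_rank_matroids[of B E r x] by (auto simp: contraction_def)
  qed
  moreover have "finite ?G" using finite_rank_matroids E by blast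
  ultimately have "card ?tr \<le> card ?G" by (rule card_inj_on_le)
  also have "\<dots> = card (rank_matroids (E - {x}) (r - 1)) + 1"
    using E by (simp add: card_insert_empty_rank_matroids)
  finally show ?thesis .
qed

lemma card_rank_matroids_power_le:
  assumes E: "finite E" and r: "0 < r"
  shows "real (card (rank_matroids E r) + 1) ^ r
         \<le> (\<Prod>x\<in>E. real (card (rank_matroids (E - {x}) (r - 1)) + 1))"
proof -
  let ?V = "{X. X \<subseteq> E \<and> card X = r}"
  let ?F = "insert {} (rank_matroids E r)"
  have "real (card ?F) ^ r \<le> (\<Prod>x\<in>E. real (card ((\<lambda>B. B \<inter> {X. x \<in> X}) ` ?F)))"
  proof (rule shearer_inequality[OF _ E _ _ r])
    show "finite ?V" using E by simp
    show "?F \<subseteq> Pow ?V" using rank_matroids_subset_Pow by blast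
    show "card {x\<in>E. X \<in> {X. x \<in> X}} = r" if "X \<in> ?V" for X
    proof -
      have "{x\<in>E. X \<in> {X. x \<in> X}} = X" using that by auto
      then show ?thesis using that by simp
    qed
  qed
  also have "\<dots> \<le> (\<Prod>x\<in>E. real (card (rank_matroids (E - {x}) (r - 1)) + 1))"
  proof (rule prod_mono)
    fix x assume "x \<in> E"
    show "0 \<le> real (card ((\<lambda>B. B \<inter> {X. x \<in> X}) ` ?F))
        \<and> real (card ((\<lambda>B. B \<inter> {X. x \<in> X}) ` ?F)) \<le> real (card (rank_matroids (E - {x}) (r - 1)) + 1)"
      using card_traces_le_card_rank_matroids[OF E, of x r]
      by (simp only: of_nat_le_iff of_nat_0_le_iff simp_thms)
  qed
  finally show ?thesis
    using E by (simp add: card_insert_empty_rank_matroids)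
qed

locale rank3_matroid =
  fixes E :: "'a::wellorder set" and B :: "'a set set"
  assumes finite_E: "finite E" and bases: "matroid_bases E B"
    and card_basis: "X \<in> B \<Longrightarrow> card X = 3"
begin

definition nonloop :: "'a \<Rightarrow> bool" where
  "nonloop x \<longleftrightarrow> (\<exists>X\<in>B. x \<in> X)"

definition indep_pair :: "'a \<Rightarrow> 'a \<Rightarrow> bool" where
  "indep_pair x y \<longleftrightarrow> (\<exists>X\<in>B. x \<in> X \<and> y \<in> X)"

definition parallel :: "'a \<Rightarrow> 'a \<Rightarrow> bool" where
  "parallel x y \<longleftrightarrow> x \<noteq> y \<and> nonloop x \<and> nonloop y \<and> \<not> indep_pair x y"

definition rep :: "'a \<Rightarrow> 'a" where
  "rep x = (LEAST y. y = x \<or> parallel x y)"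

definition reps :: "'a set" where
  "reps = {x. nonloop x \<and> rep x = x}"

text \<open>For an independent pair \<open>a, b\<close> this is the closure of \<open>{a, b}\<close>.\<close>

definition line :: "'a \<Rightarrow> 'a \<Rightarrow> 'a set" where
  "line a b = {z\<in>E. z = a \<or> z = b \<or> {a, b, z} \<notin> B}"

lemma basis_subset: "X \<in> B \<Longrightarrow> X \<subseteq> E"
  using bases unfolding matroid_bases_def by auto

lemma finite_basis: "X \<in> B \<Longrightarrow> finite X"
  using basis_subset finite_E finite_subset by blast

lemma basis_eq_triple:
  assumes "W \<in> B" "a \<in> W" "b \<in> W" "c \<in> W" "a \<noteq> b" "a \<noteq> c" "b \<noteq> c"
  shows "W = {a, b, c}"
  using assms card_basis[OF assms(1)]
  by (intro card_subset_eq[OF finite_basis[OF assms(1)], symmetric]) auto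

lemma basis_augment: "Z \<in> B \<Longrightarrow> I \<subseteq> Z \<Longrightarrow> X \<in> B \<Longrightarrow> \<exists>W\<in>B. I \<subseteq> W \<and> W \<subseteq> I \<union> X"
  using matroid_bases_augment[OF bases finite_E] by blast

lemma nonloop_in_E: "nonloop x \<Longrightarrow> x \<in> E"
  unfolding nonloop_def using basis_subset by auto

lemma indep_pair_nonloop: "indep_pair x y \<Longrightarrow> nonloop x \<and> nonloop y"
  unfolding indep_pair_def nonloop_def by auto

lemma parallel_sym: "parallel x y \<Longrightarrow> parallel y x"
  unfolding parallel_def indep_pair_def by auto

lemma parallel_trans:
  assumes "parallel x y" "parallel y z" "x \<noteq> z"
  shows "parallel x z"
proof (rule ccontr)
  assume "\<not> parallel x z"
  then obtain X where X: "X \<in> B" "x \<in> X" "z \<in> X"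
    using assms unfolding parallel_def indep_pair_def by auto
  obtain Z where Z: "Z \<in> B" "y \<in> Z" using assms unfolding parallel_def nonloop_def by auto
  obtain W where W: "W \<in> B" "y \<in> W" "W \<subseteq> insert y X"
    using basis_augment[OF Z(1) _ X(1), of "{y}"] Z by auto
  have "x \<notin> W" "z \<notin> W" using W assms unfolding parallel_def indep_pair_def by auto
  then have "W \<subseteq> insert y (X - {x, z})" using W by auto
  moreover have "card (X - {x, z}) = 1"
    using card_basis[OF X(1)] finite_basis[OF X(1)] X assms(3) by (simp add: card_Diff_subset)
  moreover have "finite (X - {x, z})" using finite_basis[OF X(1)] by simp
  ultimately have "card W \<le> card (insert y (X - {x, z}))" "card (insert y (X - {x, z})) \<le> 2"
    by (auto intro: card_mono card_insert_le_m1)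
  then have "card W \<le> 2" by linarith
  then show False using card_basis[OF W(1)] by simp
qed

lemma parallel_exchange:
  assumes p: "parallel x y" and W: "x \<notin> W" "y \<notin> W" "insert x W \<in> B"
  shows "insert y W \<in> B"
proof -
  obtain Z where Z: "Z \<in> B" "y \<in> Z" using p unfolding parallel_def nonloop_def by auto
  obtain W' where W': "W' \<in> B" "y \<in> W'" "W' \<subseteq> insert y (insert x W)"
    using basis_augment[OF Z(1) _ W(3), of "{y}"] Z by auto
  have "x \<notin> W'" using W' p unfolding parallel_def indep_pair_def by auto
  then have sub: "W' \<subseteq> insert y W" using W' by auto
  have "finite W" using finite_basis[OF W(3)] by simp
  then have "card (insert y W) = card W'"
    using card_basis[OF W(3)] card_basis[OF W'(1)] W by simp
  then show ?thesis using W' card_subset_eq[OF _ sub] \<open>finite W\<close> by simp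
qed

lemma rep_cases: "rep x = x \<or> parallel x (rep x)"
  unfolding rep_def by (rule LeastI[of "\<lambda>y. y = x \<or> parallel x y" x]) simp

lemma rep_eq_iff:
  assumes "nonloop x" "nonloop y"
  shows "rep x = rep y \<longleftrightarrow> x = y \<or> parallel x y"
proof
  assume xy: "x = y \<or> parallel x y"
  have "z = x \<or> parallel x z \<longleftrightarrow> z = y \<or> parallel y z" for z
    using xy parallel_sym parallel_trans[of y x z] parallel_trans[of x y z] by blast
  then show "rep x = rep y" unfolding rep_def by simp
next
  assume eq: "rep x = rep y"
  show "x = y \<or> parallel x y"
  proof (cases "x = y")
    case False
    have "rep x = x \<or> parallel x (rep x)" "rep x = y \<or> parallel (rep x) y"
      using rep_cases[of x] rep_cases[of y] eq parallel_sym by auto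
    then show ?thesis
      using False parallel_trans[of x "rep x" y] parallel_sym[of y x] by auto
  qed simp
qed

lemma nonloop_rep: "nonloop x \<Longrightarrow> nonloop (rep x)"
  using rep_cases unfolding parallel_def by metis

lemma rep_in_reps:
  assumes "nonloop x" shows "rep x \<in> reps"
proof -
  have "rep (rep x) = rep x"
    using rep_eq_iff[OF nonloop_rep[OF assms] assms] rep_cases[of x] parallel_sym by blast
  then show ?thesis unfolding reps_def using nonloop_rep[OF assms] by simp
qed

lemma reps_subset: "reps \<subseteq> E"
  unfolding reps_def using nonloop_in_E by auto

lemma finite_reps: "finite reps"
  using finite_E reps_subset finite_subset by blast

lemma indep_pair_reps:
  assumes "a \<in> reps" "b \<in> reps" "a \<noteq> b" shows "indep_pair a b"
  using assms rep_eq_iff[of a b] unfolding reps_def parallel_def by auto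

lemma inj_on_rep_basis:
  assumes X: "X \<in> B" shows "inj_on rep X"
proof (rule inj_onI)
  fix x y assume "x \<in> X" "y \<in> X" "rep x = rep y"
  moreover have "nonloop x" "nonloop y" "indep_pair x y"
    using X \<open>x \<in> X\<close> \<open>y \<in> X\<close> unfolding nonloop_def indep_pair_def by blast+
  ultimately show "x = y" using rep_eq_iff unfolding parallel_def by blast
qed

lemma card_reps: "3 \<le> card reps"
proof -
  obtain X where X: "X \<in> B" using bases unfolding matroid_bases_def by auto
  then have "rep ` X \<subseteq> reps" using rep_in_reps unfolding nonloop_def by blast
  then have "card (rep ` X) \<le> card reps" using finite_reps by (rule card_mono[rotated])
  then show ?thesis using card_image[OF inj_on_rep_basis[OF X]] card_basis[OF X] by simp
qed

lemma endpoints_in_line: "indep_pair a b \<Longrightarrow> a \<in> line a b \<and> b \<in> line a b"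
  unfolding line_def using indep_pair_nonloop nonloop_in_E by auto

lemma basis_not_subset_line:
  assumes ab: "indep_pair a b" "a \<noteq> b" and X: "X \<in> B"
  shows "\<not> X \<subseteq> line a b"
proof
  assume XL: "X \<subseteq> line a b"
  obtain Z where Z: "Z \<in> B" "a \<in> Z" "b \<in> Z" using ab unfolding indep_pair_def by blast
  then obtain W where W: "W \<in> B" "{a, b} \<subseteq> W" "W \<subseteq> {a, b} \<union> X"
    using basis_augment[OF Z(1) _ X, of "{a,b}"] by blast
  have "card {a, b} \<le> 2" by (simp add: card_insert_if)
  then have "\<not> W \<subseteq> {a, b}"
    using card_basis[OF W(1)] card_mono[of "{a,b}" W] by auto
  then obtain w where w: "w \<in> W" "w \<noteq> a" "w \<noteq> b" by blast
  then have "{a, b, w} \<in> B" using basis_eq_triple[OF W(1)] W(1,2) ab(2) by auto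
  moreover have "w \<in> line a b" using XL W(3) w by blast
  ultimately show False using w(2,3) unfolding line_def by blast
qed

lemma line_eq:
  assumes uv: "indep_pair u v" "u \<noteq> v"
    and ab: "a \<in> line u v" "b \<in> line u v" "a \<noteq> b" "indep_pair a b"
  shows "line a b = line u v"
proof -
  have sub: "line x y \<subseteq> line a' b'"
    if xy: "indep_pair x y" "x \<noteq> y" and ab': "a' \<in> line x y" "b' \<in> line x y" for x y a' b'
  proof
    fix z assume z: "z \<in> line x y"
    then have "{a', b', z} \<notin> B"
      using basis_not_subset_line[OF xy, of "{a', b', z}"] ab' by auto
    then show "z \<in> line a' b'" using z unfolding line_def by auto
  qed
  have 1: "line u v \<subseteq> line a b" using sub[OF uv ab(1,2)] .
  then have "u \<in> line a b" "v \<in> line a b" using endpoints_in_line[OF uv(1)] by auto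
  then show ?thesis using 1 sub[OF ab(4,3)] by blast
qed

lemma basis_not_parallel: "X \<in> B \<Longrightarrow> x \<in> X \<Longrightarrow> y \<in> X \<Longrightarrow> \<not> parallel x y"
  unfolding parallel_def indep_pair_def by blast

lemma in_line_iff_rep:
  assumes z: "nonloop z"
  shows "z \<in> line a b \<longleftrightarrow> rep z \<in> line a b"
proof (cases "rep z = z")
  case False
  let ?w = "rep z"
  have p: "parallel z ?w" "parallel ?w z" using False rep_cases parallel_sym by metis+
  have E: "z \<in> E" "?w \<in> E" using z nonloop_in_E nonloop_rep by auto
  show ?thesis
  proof (cases "z \<in> {a, b} \<or> ?w \<in> {a, b}")
    case True
    have "x \<in> line a b" if x: "x = z \<or> x = ?w" for x
    proof (cases "x \<in> {a, b}")
      case False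
      then have "{a, b, x} \<notin> B"
        using True x p basis_not_parallel[of "{a, b, x}"] by auto
      then show ?thesis using x E unfolding line_def by auto
    qed (use x E in \<open>auto simp: line_def\<close>)
    then show ?thesis by blast
  next
    case False
    have "{a, b, z} \<in> B \<longleftrightarrow> {a, b, ?w} \<in> B"
    proof
      assume "{a, b, z} \<in> B"
      then have "insert ?w {a, b} \<in> B"
        using parallel_exchange[OF p(1), of "{a, b}"] False by (simp add: insert_commute)
      then show "{a, b, ?w} \<in> B" by (simp add: insert_commute)
    next
      assume "{a, b, ?w} \<in> B"
      then have "insert z {a, b} \<in> B"
        using parallel_exchange[OF p(2), of "{a, b}"] False by (simp add: insert_commute)
      then show "{a, b, z} \<in> B" by (simp add: insert_commute)
    qed
    then show ?thesis using False E unfolding line_def by auto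
  qed
qed simp

end

section \<open>Encoding rank-3 matroids\<close>

text \<open>
  A code \<open>(J, h, T)\<close> lists the elements \<open>J\<close> that are not representatives of their parallel
  class, sends each of them to its representative (\<open>None\<close> for a loop), and contains for every
  line with at least three representatives the triples \<open>{a, b, c}\<close> with \<open>a < b\<close> its two smallest
  points; the line is then recovered as \<open>fan T a b\<close>. A 3-set is a basis iff its elements are
  nonloops with distinct representatives that do not all lie on one such line.
\<close>

definition fan :: "'a::ord set set \<Rightarrow> 'a \<Rightarrow> 'a \<Rightarrow> 'a set" where
  "fan T a b = {a, b} \<union> {c. b < c \<and> {a, b, c} \<in> T}"

definition relabel :: "'a set \<Rightarrow> ('a \<Rightarrow> 'a option) \<Rightarrow> 'a \<Rightarrow> 'a option" where
  "relabel J h z = (if z \<in> J then h z else Some z)"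

definition decode_bases :: "'a::ord set \<Rightarrow> 'a set \<Rightarrow> ('a \<Rightarrow> 'a option) \<Rightarrow> 'a set set \<Rightarrow> 'a set set" where
  "decode_bases E J h T =
     {X. X \<subseteq> E \<and> card X = 3 \<and> None \<notin> relabel J h ` X \<and> inj_on (relabel J h) X \<and>
         \<not> (\<exists>a b c. a < b \<and> {a, b, c} \<in> T \<and> (\<forall>z\<in>X. the (relabel J h z) \<in> fan T a b))}"

context rank3_matroid
begin

definition long_lines :: "'a set set" where
  "long_lines = {l. \<exists>u v. indep_pair u v \<and> u \<noteq> v \<and> l = reps \<inter> line u v \<and> 3 \<le> card l}"

definition triples :: "'a set set" where
  "triples = (\<Union>l\<in>long_lines. (\<lambda>c. {Min l, Min (l - {Min l}), c}) ` (l - {Min l, Min (l - {Min l})}))"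

definition nonreps :: "'a set" where
  "nonreps = E - reps"

definition rep_label :: "'a \<Rightarrow> 'a option" where
  "rep_label = restrict (\<lambda>x. if nonloop x then Some (rep x) else None) nonreps"

lemma relabel_rep_label:
  "z \<in> E \<Longrightarrow> relabel nonreps rep_label z = (if nonloop z then Some (rep z) else None)"
  by (auto simp: relabel_def rep_label_def nonreps_def reps_def)

lemma long_lines_subset: "l \<in> long_lines \<Longrightarrow> l \<subseteq> reps"
  unfolding long_lines_def by auto

lemma finite_long_line: "l \<in> long_lines \<Longrightarrow> finite l"
  using long_lines_subset finite_reps finite_subset by blast

lemma card_long_line: "l \<in> long_lines \<Longrightarrow> 3 \<le> card l"
  unfolding long_lines_def by blast

lemma long_line_eq:
  assumes l: "l \<in> long_lines" and xy: "x \<in> l" "y \<in> l" "x \<noteq> y"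
  shows "l = reps \<inter> line x y"
proof -
  obtain u v where uv: "indep_pair u v" "u \<noteq> v" "l = reps \<inter> line u v"
    using l unfolding long_lines_def by blast
  have "indep_pair x y" using xy long_lines_subset[OF l] indep_pair_reps by blast
  then show ?thesis using line_eq[OF uv(1,2), of x y] xy uv(3) by auto
qed

lemma long_lines_inter:
  assumes l: "l \<in> long_lines" "l' \<in> long_lines" "l \<noteq> l'"
  shows "card (l \<inter> l') \<le> 1"
proof (rule ccontr)
  assume "\<not> card (l \<inter> l') \<le> 1"
  moreover have "finite (l \<inter> l')" using finite_long_line[OF l(1)] by simp
  ultimately obtain x y where "x \<in> l \<inter> l'" "y \<in> l \<inter> l'" "x \<noteq> y"
    by (auto simp: card_le_Suc0_iff_eq)
  then show False using long_line_eq[OF l(1), of x y] long_line_eq[OF l(2), of x y] l(3) by auto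
qed

lemma long_line_min2:
  assumes "l \<in> long_lines"
  shows "Min l \<in> l" "Min (l - {Min l}) \<in> l - {Min l}" "Min l < Min (l - {Min l})"
    and "\<And>c. c \<in> l - {Min l, Min (l - {Min l})} \<Longrightarrow> Min (l - {Min l}) < c"
    and "card (l - {Min l, Min (l - {Min l})}) = card l - 2"
proof -
  have fin: "finite l" "2 \<le> card l" using finite_long_line[OF assms] card_long_line[OF assms] by auto
  note m = Min_Diff_Min[OF fin]
  show "Min l \<in> l" "Min (l - {Min l}) \<in> l - {Min l}" "Min l < Min (l - {Min l})"
    by (fact m(1), fact m(2), fact m(3))
  show "Min (l - {Min l}) < c" if "c \<in> l - {Min l, Min (l - {Min l})}" for c
    using that by (rule m(4))
  have "{Min l, Min (l - {Min l})} \<subseteq> l" "card {Min l, Min (l - {Min l})} = 2"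
    using m(1-3) by auto
  then show "card (l - {Min l, Min (l - {Min l})}) = card l - 2"
    using fin(1) by (simp add: card_Diff_subset)
qed

lemma triples_dependent:
  assumes "t \<in> triples"
  shows "t \<subseteq> reps" "card t = 3" "t \<notin> B"
proof -
  obtain l c where l: "l \<in> long_lines" and c: "c \<in> l - {Min l, Min (l - {Min l})}"
    and t: "t = {Min l, Min (l - {Min l}), c}"
    using assms unfolding triples_def by blast
  obtain u v where uv: "indep_pair u v" "u \<noteq> v" "l = reps \<inter> line u v"
    using l unfolding long_lines_def by blast
  note m = long_line_min2[OF l]
  have "t \<subseteq> l" using m(1,2) c t by auto
  then show "t \<subseteq> reps" "t \<notin> B" using uv basis_not_subset_line[OF uv(1,2)] by auto
  show "card t = 3" using m(2,3) c t by auto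
qed

lemma long_line_subset_fan:
  assumes l: "l \<in> long_lines"
  defines "a \<equiv> Min l" and "b \<equiv> Min (l - {Min l})"
  shows "a < b" "\<exists>c. {a, b, c} \<in> triples" "l \<subseteq> fan triples a b"
proof -
  note m = long_line_min2[OF l, folded a_def b_def]
  show "a < b" using m by simp
  have abc: "{a, b, c} \<in> triples" if "c \<in> l - {a, b}" for c
    using l that unfolding triples_def a_def b_def by blast
  have "card (l - {a, b}) \<noteq> 0" using m(5) card_long_line[OF l] by simp
  then have "l - {a, b} \<noteq> {}" by (metis card.empty)
  then show "\<exists>c. {a, b, c} \<in> triples" using abc by blast
  show "l \<subseteq> fan triples a b" using abc m(4) unfolding fan_def by auto
qed

lemma card_triples_le: "card triples \<le> (\<Sum>l\<in>long_lines. card l - 2)"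
proof -
  have fin: "finite long_lines"
    using finite_reps long_lines_subset by (auto intro: finite_subset[of _ "Pow reps"])
  have "card triples \<le> (\<Sum>l\<in>long_lines. card ((\<lambda>c. {Min l, Min (l - {Min l}), c}) ` (l - {Min l, Min (l - {Min l})})))"
    unfolding triples_def by (rule card_UN_le[OF fin])
  also have "\<dots> \<le> (\<Sum>l\<in>long_lines. card (l - {Min l, Min (l - {Min l})}))"
    by (intro sum_mono card_image_le) (simp add: finite_long_line)
  also have "\<dots> = (\<Sum>l\<in>long_lines. card l - 2)"
  proof (intro sum.cong refl)
    fix l assume "l \<in> long_lines"
    then show "card (l - {Min l, Min (l - {Min l})}) = card l - 2" by (rule long_line_min2)
  qed
  finally show ?thesis .
qed

lemma three_card_triples_le: "3 * card triples \<le> card reps choose 2"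
proof -
  have "3 * card triples \<le> 3 * (\<Sum>l\<in>long_lines. card l - 2)" using card_triples_le by simp
  also have "\<dots> \<le> card reps choose 2"
  proof (rule sum_lines_le_choose_two[OF finite_reps])
    show "long_lines \<subseteq> Pow reps" using long_lines_subset by blast
  qed (fact card_long_line, fact long_lines_inter)
  finally show ?thesis .
qed

lemma fan_subset_line: "indep_pair a b \<Longrightarrow> fan triples a b \<subseteq> line a b"
  using endpoints_in_line triples_dependent reps_subset unfolding fan_def line_def by blast

lemma bases_subset_decode: "B \<subseteq> decode_bases E nonreps rep_label triples"
proof
  fix X assume X: "X \<in> B"
  have XE: "X \<subseteq> E" using basis_subset[OF X] .
  have nl: "nonloop z" if "z \<in> X" for z using X that unfolding nonloop_def by blast
  have lab: "relabel nonreps rep_label z = Some (rep z)" if "z \<in> X" for z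
    using relabel_rep_label nl that XE by auto
  have "\<not> (\<exists>a b c. a < b \<and> {a, b, c} \<in> triples \<and> (\<forall>z\<in>X. the (relabel nonreps rep_label z) \<in> fan triples a b))"
  proof
    assume "\<exists>a b c. a < b \<and> {a, b, c} \<in> triples \<and> (\<forall>z\<in>X. the (relabel nonreps rep_label z) \<in> fan triples a b)"
    then obtain a b c where abc: "a < b" "{a, b, c} \<in> triples" "\<forall>z\<in>X. rep z \<in> fan triples a b"
      using lab by auto
    have iab: "indep_pair a b" using triples_dependent(1)[OF abc(2)] indep_pair_reps abc(1) by auto
    then have "X \<subseteq> line a b" using fan_subset_line in_line_iff_rep nl abc(3) by blast
    then show False using basis_not_subset_line[OF iab _ X] abc(1) by simp
  qed
  moreover have "inj_on (relabel nonreps rep_label) X"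
    using inj_on_rep_basis[OF X] lab by (auto simp: inj_on_def)
  ultimately show "X \<in> decode_bases E nonreps rep_label triples"
    unfolding decode_bases_def using XE card_basis[OF X] lab by auto
qed

lemma decode_subset_bases: "decode_bases E nonreps rep_label triples \<subseteq> B"
proof
  fix X assume "X \<in> decode_bases E nonreps rep_label triples"
  then have XE: "X \<subseteq> E" and card_X: "card X = 3"
    and none: "None \<notin> relabel nonreps rep_label ` X" and inj: "inj_on (relabel nonreps rep_label) X"
    and no_fan: "\<not> (\<exists>a b c. a < b \<and> {a, b, c} \<in> triples \<and> (\<forall>z\<in>X. the (relabel nonreps rep_label z) \<in> fan triples a b))"
    unfolding decode_bases_def by auto
  have nl: "nonloop z" and lab: "relabel nonreps rep_label z = Some (rep z)" if "z \<in> X" for z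
  proof -
    have "relabel nonreps rep_label z \<noteq> None" using none that by force
    then show "nonloop z" "relabel nonreps rep_label z = Some (rep z)"
      using relabel_rep_label[of z] that XE by (auto split: if_splits)
  qed
  have rinj: "inj_on rep X" using inj lab by (auto simp: inj_on_def)
  have indep: "indep_pair x y" if "x \<in> X" "y \<in> X" "x \<noteq> y" for x y
    using rep_eq_iff[OF nl[OF that(1)] nl[OF that(2)]] inj_onD[OF rinj _ that(1,2)] that(3)
      nl[OF that(1)] nl[OF that(2)]
    unfolding parallel_def by blast
  show "X \<in> B"
  proof (rule ccontr)
    assume nB: "X \<notin> B"
    obtain x1 x2 x3 where X3: "X = {x1, x2, x3}" "x1 \<noteq> x2" "x2 \<noteq> x3" "x1 \<noteq> x3"
      using card_X card_3_iff by metis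
    have i12: "indep_pair x1 x2" using indep X3 by simp
    have "X \<subseteq> line x1 x2" using nB XE endpoints_in_line[OF i12] unfolding X3(1) line_def by auto
    then have rep_X: "rep ` X \<subseteq> reps \<inter> line x1 x2" using in_line_iff_rep nl rep_in_reps by auto
    have "card (rep ` X) \<le> card (reps \<inter> line x1 x2)"
      using finite_reps by (intro card_mono[OF _ rep_X]) auto
    then have "reps \<inter> line x1 x2 \<in> long_lines"
      using card_image[OF rinj] card_X i12 X3(2) unfolding long_lines_def by auto
    from long_line_subset_fan[OF this] obtain a b c where
      "a < b" "{a, b, c} \<in> triples" "reps \<inter> line x1 x2 \<subseteq> fan triples a b" by blast
    then show False using no_fan rep_X lab by fastforce
  qed
qed

lemma decode_bases_encode: "decode_bases E nonreps rep_label triples = B"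
  using bases_subset_decode decode_subset_bases by blast

lemma rep_label_PiE: "rep_label \<in> nonreps \<rightarrow>\<^sub>E insert None (Some ` E)"
proof -
  have "nonloop x \<Longrightarrow> rep x \<in> E" for x using rep_in_reps reps_subset by blast
  then show ?thesis unfolding rep_label_def by (auto simp: restrict_PiE_iff)
qed

lemma triples_subset: "triples \<subseteq> {X. X \<subseteq> E \<and> card X = 3}"
  using triples_dependent reps_subset by blast

lemma card_nonreps: "card nonreps = card E - card reps"
  unfolding nonreps_def using reps_subset finite_E by (simp add: card_Diff_subset finite_subset)

end

definition triple_families :: "'a set \<Rightarrow> nat \<Rightarrow> 'a set set set" where
  "triple_families E k = {T. T \<subseteq> {X. X \<subseteq> E \<and> card X = 3} \<and> 3 * card T \<le> k choose 2}"

definition rank3_codes :: "'a set \<Rightarrow> ('a set \<times> ('a \<Rightarrow> 'a option) \<times> 'a set set) set" where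
  "rank3_codes E = (SIGMA J:{J. J \<subseteq> E \<and> card J + 3 \<le> card E}.
     (J \<rightarrow>\<^sub>E insert None (Some ` E)) \<times> triple_families E (card E - card J))"

lemma card_rank_matroids_3_le_codes:
  fixes E :: "'a::wellorder set"
  assumes E: "finite E"
  shows "card (rank_matroids E 3) \<le> card (rank3_codes E)"
proof -
  define encode where
    "encode B = (rank3_matroid.nonreps E B, rank3_matroid.rep_label E B, rank3_matroid.triples E B)" for B
  have loc: "rank3_matroid E B" if "B \<in> rank_matroids E 3" for B
    using that E unfolding rank_matroids_def rank3_matroid_def by auto
  have "inj_on encode (rank_matroids E 3)"
  proof (rule inj_onI)
    fix B1 B2 assume B: "B1 \<in> rank_matroids E 3" "B2 \<in> rank_matroids E 3" "encode B1 = encode B2"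
    show "B1 = B2"
      using rank3_matroid.decode_bases_encode[OF loc[OF B(1)]]
        rank3_matroid.decode_bases_encode[OF loc[OF B(2)]] B(3)
      unfolding encode_def by (metis prod.inject)
  qed
  moreover have "encode ` rank_matroids E 3 \<subseteq> rank3_codes E"
  proof (rule image_subsetI)
    fix B assume "B \<in> rank_matroids E 3"
    then interpret rank3_matroid E B by (rule loc)
    have "card reps \<le> card E" using card_mono[OF E reps_subset] .
    then show "encode B \<in> rank3_codes E"
      unfolding encode_def rank3_codes_def triple_families_def
      using card_nonreps card_reps three_card_triples_le rep_label_PiE triples_subset
      by (auto simp: nonreps_def)
  qed
  moreover have "finite (rank3_codes E)"
    unfolding rank3_codes_def triple_families_def using E
    by (intro finite_SigmaI finite_cartesian_product finite_PiE) (auto intro: finite_subset)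
  ultimately show ?thesis by (rule card_inj_on_le)
qed

section \<open>Counting codes\<close>

lemma sum_power_card_Pow:
  fixes x :: real
  assumes "finite A"
  shows "(\<Sum>S\<in>Pow A. x ^ card S) = (1 + x) ^ card A"
  using prod_add[OF assms, of "\<lambda>_. x" "\<lambda>_. 1"] by (simp add: add.commute)

lemma card_small_subsets_le:
  fixes x :: real
  assumes A: "finite A" and x: "0 < x" "x \<le> 1"
  shows "real (card {T. T \<subseteq> A \<and> card T \<le> t}) * x ^ t \<le> (1 + x) ^ card A"
proof -
  have "real (card {T. T \<subseteq> A \<and> card T \<le> t}) * x ^ t = (\<Sum>S\<in>{T. T \<subseteq> A \<and> card T \<le> t}. x ^ t)"
    by simp
  also have "\<dots> \<le> (\<Sum>S\<in>{T. T \<subseteq> A \<and> card T \<le> t}. x ^ card S)"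
    by (rule sum_mono) (use x in \<open>auto intro: power_decreasing\<close>)
  also have "\<dots> \<le> (\<Sum>S\<in>Pow A. x ^ card S)"
    by (rule sum_mono2) (use A x in auto)
  finally show ?thesis using sum_power_card_Pow[OF A] by simp
qed

lemma ln_add_one_le_cubic:
  fixes x :: real assumes x: "0 \<le> x"
  shows "ln (1 + x) \<le> x - x^2/2 + x^3/3"
proof -
  define g where "g t = t - t^2/2 + t^3/3 - ln (1 + t)" for t :: real
  define g' where "g' t = 1 - t + t^2 - 1 / (1 + t)" for t :: real
  have d: "(g has_real_derivative g' t) (at t)" if "t \<in> {0..x}" for t
  proof -
    have "1 + t > 0" using that by auto
    then show ?thesis unfolding g_def g'_def
      by (auto intro!: derivative_eq_intros simp: power2_eq_square field_simps)
  qed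
  have nn: "g' t \<ge> 0" if "t \<in> {0..x}" for t
  proof -
    have t: "t \<ge> 0" using that by auto
    have "g' t = t^3 / (1 + t)" unfolding g'_def using t
      by (simp add: field_simps power2_eq_square power3_eq_cube)
    then show ?thesis using t by simp
  qed
  have "g 0 \<le> g x" by (rule deriv_nonneg_imp_mono[OF d nn x])
  then show ?thesis unfolding g_def by simp
qed

lemma eight_square_le_powr:
  fixes a e :: real assumes a: "13 \<le> a" and e: "17/6 \<le> e"
  shows "8 * a^2 \<le> a powr e"
proof -
  have "(8::real) ^ 6 \<le> 13 ^ 5" by simp
  also have "(13::real) ^ 5 = (13 powr (5/6)) ^ 6"
    by (simp add: powr_realpow[symmetric] powr_powr)
  finally have "8 ^ Suc 5 \<le> ((13::real) powr (5/6)) ^ Suc 5" by (simp add: numeral_eq_Suc)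
  then have "8 \<le> (13::real) powr (5/6)" by (rule power_le_imp_le_base) simp
  also have "\<dots> \<le> a powr (5/6)" using a by (intro powr_mono2) auto
  finally have "8 * a^2 \<le> a powr (5/6) * a powr 2"
    using a by (simp add: powr_numeral mult_right_mono)
  also have "\<dots> = a powr (17/6)" by (simp add: powr_add[symmetric])
  also have "\<dots> \<le> a powr e" using a e by (intro powr_mono) auto
  finally show ?thesis .
qed

lemma label_weight_le:
  fixes n :: nat assumes n: "15 \<le> n"
  shows "real n * (real n + 1) * (real n - 2) powr (- (real n + 2) / 6) \<le> 1/4"
proof -
  define a where "a = real n - 2"
  have a: "13 \<le> a" using n unfolding a_def by simp
  have "real n * (real n + 1) \<le> 2 * a^2"
    using mult_nonneg_nonneg[of "real n - 1" "real n - 8"] n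
    unfolding a_def by (simp add: power2_eq_square algebra_simps)
  moreover have "8 * a^2 \<le> a powr ((real n + 2) / 6)"
    using eight_square_le_powr[OF a] n by simp
  ultimately have "real n * (real n + 1) / a powr ((real n + 2) / 6) \<le> 2 * a^2 / (8 * a^2)"
    using a by (intro frac_le) auto
  also have "\<dots> = 1/4" using a by simp
  moreover have "a powr (- (real n + 2) / 6) = 1 / a powr ((real n + 2) / 6)"
    using powr_minus_divide[of a "(real n + 2) / 6"] by (simp add: minus_divide_left)
  ultimately show ?thesis unfolding a_def by simp
qed

lemma cubic_correction_ge:
  fixes y :: real assumes y: "y \<ge> 15"
  shows "(y * (y - 1) / 6) * (1 / (y - 2)) * (1/2 - (1 / (y - 2)) / 3) \<ge> 5/4"
proof -
  define t where "t = y - 15"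
  have t: "t \<ge> 0" using y unfolding t_def by simp
  have pos: "y - 2 > 0" using y by simp
  have "y * (y - 1) * (3 * y - 8) - 45 * (y - 2)^2 = 165 + 533 * t + 79 * t^2 + 3 * t^3"
    unfolding t_def by (simp add: algebra_simps power2_eq_square power3_eq_cube)
  also have "\<dots> \<ge> 0" using t by simp
  finally have main: "y * (y - 1) * (3 * y - 8) \<ge> 45 * (y - 2)^2" by simp
  have "(y * (y - 1) / 6) * (1 / (y - 2)) * (1/2 - (1 / (y - 2)) / 3)
      = y * (y - 1) * (3 * y - 8) / (36 * (y - 2)^2)"
    using pos by (simp add: field_simps power2_eq_square)
  also have "\<dots> \<ge> 45 * (y - 2)^2 / (36 * (y - 2)^2)"
    by (rule divide_right_mono) (use main pos in auto)
  also have "45 * (y - 2)^2 / (36 * (y - 2)^2) = 5/4" using pos by simp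
  finally show ?thesis by simp
qed

lemma choose_two_div_three_le:
  fixes n j :: nat assumes j: "j + 3 \<le> n"
  shows "real (((n - j) choose 2) div 3) \<le> real n * (real n - 1) / 6 - real j * (real n + 2) / 6"
proof -
  have "6 * (((n - j) choose 2) div 3) \<le> (n - j) * (n - j - 1)"
    using choose_two[of "n - j"] by linarith
  moreover have "real ((n - j) * (n - j - 1)) = (real n - real j) * (real n - real j - 1)"
    using j by (simp add: of_nat_diff)
  ultimately have "6 * real (((n - j) choose 2) div 3) \<le> (real n - real j) * (real n - real j - 1)"
    by (metis of_nat_le_iff of_nat_mult of_nat_numeral)
  moreover have "real j * (real j - real n + 3) \<le> 0"
    using j by (intro mult_nonneg_nonpos) auto
  ultimately have "6 * real (((n - j) choose 2) div 3) \<le> real n * (real n - 1) - real j * (real n + 2)"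
    by (auto simp: algebra_simps)
  then show ?thesis by simp
qed

lemma code_term_le:
  fixes n j :: nat assumes n: "15 \<le> n" and j: "j + 3 \<le> n"
  shows "(real n + 1) ^ j * (real n - 2) ^ (((n - j) choose 2) div 3)
    \<le> (real n - 2) powr (real n * (real n - 1) / 6) * ((real n + 1) * (real n - 2) powr (- (real n + 2) / 6)) ^ j"
proof -
  define a where "a = real n - 2"
  have a: "1 \<le> a" using n unfolding a_def by simp
  have "a ^ (((n - j) choose 2) div 3) = a powr real (((n - j) choose 2) div 3)"
    using a by (simp add: powr_realpow)
  also have "\<dots> \<le> a powr (real n * (real n - 1) / 6 + real j * (- (real n + 2) / 6))"
    using choose_two_div_three_le[OF j] a by (intro powr_mono) (auto simp: field_simps)
  also have "\<dots> = a powr (real n * (real n - 1) / 6) * (a powr (- (real n + 2) / 6)) ^ j"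
  proof -
    have "(a powr (- (real n + 2) / 6)) ^ j = a powr (real j * (- (real n + 2) / 6))"
      using a by (simp add: powr_realpow[symmetric] powr_powr mult.commute)
    then show ?thesis by (simp add: powr_add)
  qed
  finally show ?thesis
    unfolding a_def using n by (simp add: mult_left_mono power_mult_distrib mult.left_commute)
qed

lemma real_choose_three: "real (n choose 3) = real n * (real n - 1) * (real n - 2) / 6"
proof (cases "n \<ge> 3")
  case True
  have "real (n choose 3) = (real n gchoose 3)" by (simp add: binomial_gbinomial)
  also have "\<dots> = real n * (real n - 1) * (real n - 2) / 6"
    by (simp add: gbinomial_prod_rev numeral_eq_Suc atLeast0LessThan lessThan_Suc algebra_simps)
  finally show ?thesis .
next
  case False
  then have "n = 0 \<or> n = 1 \<or> n = 2" by auto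
  then show ?thesis by auto
qed

lemma card_rank3_codes:
  assumes E: "finite E"
  shows "card (rank3_codes E)
       = (\<Sum>J\<in>{J. J \<subseteq> E \<and> card J + 3 \<le> card E}. (card E + 1) ^ card J * card (triple_families E (card E - card J)))"
proof -
  have "card (insert None (Some ` E)) = card E + 1" using E by (simp add: card_image)
  then have "card (J \<rightarrow>\<^sub>E insert None (Some ` E)) = (card E + 1) ^ card J" if "J \<subseteq> E" for J
    using that E by (subst card_PiE) (auto intro: finite_subset)
  moreover have "finite (J \<rightarrow>\<^sub>E insert None (Some ` E))" if "J \<subseteq> E" for J
    using that E by (intro finite_PiE) (auto intro: finite_subset)
  moreover have "finite (triple_families E k)" for k
    unfolding triple_families_def using E by simp
  ultimately show ?thesis
    unfolding rank3_codes_def using E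
    by (subst card_SigmaI) (auto intro!: sum.cong simp: card_cartesian_product)
qed

lemma card_triple_families_le:
  assumes E: "finite E" "card E = n" and n: "15 \<le> n" and j: "j + 3 \<le> n"
  shows "real ((n + 1) ^ j) * real (card (triple_families E (n - j)))
         \<le> (1 + 1 / (real n - 2)) ^ (n choose 3) * (real n - 2) powr (real n * (real n - 1) / 6)
            * ((real n + 1) * (real n - 2) powr (- (real n + 2) / 6)) ^ j"
proof -
  define x where "x = 1 / (real n - 2)"
  define t where "t = ((n - j) choose 2) div 3"
  let ?V = "{X. X \<subseteq> E \<and> card X = 3}"
  have x: "0 < x" "x \<le> 1" using n unfolding x_def by auto
  have V: "finite ?V" "card ?V = n choose 3" using n_subsets[OF E(1), of 3] E by auto
  have "triple_families E (n - j) \<subseteq> {T. T \<subseteq> ?V \<and> card T \<le> t}"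
    unfolding triple_families_def t_def by auto
  then have "real (card (triple_families E (n - j))) * x ^ t \<le> real (card {T. T \<subseteq> ?V \<and> card T \<le> t}) * x ^ t"
    using x(1) V(1) by (intro mult_right_mono) (auto intro: card_mono)
  also have "\<dots> \<le> (1 + x) ^ (n choose 3)" using card_small_subsets_le[OF V(1) x, of t] V(2) by simp
  finally have "real (card (triple_families E (n - j))) \<le> (1 + x) ^ (n choose 3) * (real n - 2) ^ t"
    using x(1) unfolding x_def by (simp add: field_simps power_one_over)
  then have "real ((n + 1) ^ j) * real (card (triple_families E (n - j)))
      \<le> (1 + x) ^ (n choose 3) * ((real n + 1) ^ j * (real n - 2) ^ t)"
    using mult_left_mono[of _ _ "(real n + 1) ^ j"] by (simp add: add.commute mult.left_commute)
  also have "\<dots> \<le> (1 + x) ^ (n choose 3) * ((real n - 2) powr (real n * (real n - 1) / 6)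
      * ((real n + 1) * (real n - 2) powr (- (real n + 2) / 6)) ^ j)"
    using code_term_le[OF n j] x(1) unfolding t_def by (intro mult_left_mono) auto
  finally show ?thesis unfolding x_def by (simp add: mult.assoc)
qed

lemma card_rank3_codes_le:
  assumes E: "finite E" "card E = n" and n: "15 \<le> n"
  shows "real (card (rank3_codes E))
         \<le> (1 + 1 / (real n - 2)) ^ (n choose 3) * (real n - 2) powr (real n * (real n - 1) / 6)
            * (1 + (real n + 1) * (real n - 2) powr (- (real n + 2) / 6)) ^ n"
proof -
  define A where "A = (1 + 1 / (real n - 2)) ^ (n choose 3) * (real n - 2) powr (real n * (real n - 1) / 6)"
  define q where "q = (real n + 1) * (real n - 2) powr (- (real n + 2) / 6)"
  have "real (card (rank3_codes E))
      = (\<Sum>J\<in>{J. J \<subseteq> E \<and> card J + 3 \<le> n}. real ((n + 1) ^ card J) * real (card (triple_families E (n - card J))))"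
    using card_rank3_codes[OF E(1)] E(2) by simp
  also have "\<dots> \<le> (\<Sum>J\<in>{J. J \<subseteq> E \<and> card J + 3 \<le> n}. A * q ^ card J)"
    using card_triple_families_le[OF E n] unfolding A_def q_def by (intro sum_mono) auto
  also have "\<dots> \<le> (\<Sum>J\<in>Pow E. A * q ^ card J)"
    using E n by (intro sum_mono2) (auto simp: A_def q_def)
  also have "\<dots> = A * (1 + q) ^ n"
    using sum_power_card_Pow[OF E(1), of q] E(2) by (simp add: sum_distrib_left[symmetric])
  finally show ?thesis unfolding A_def q_def .
qed

lemma code_factors_le:
  fixes n :: nat assumes n: "15 \<le> n"
  shows "(1 + 1 / (real n - 2)) ^ (n choose 3) * (1 + (real n + 1) * (real n - 2) powr (- (real n + 2) / 6)) ^ n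
         \<le> exp (real n * (real n - 1) / 6 - 1)"
proof -
  define y where "y = real n"
  define K where "K = y * (y - 1) / 6"
  define x where "x = 1 / (y - 2)"
  define q where "q = (y + 1) * (y - 2) powr (- (y + 2) / 6)"
  have y: "15 \<le> y" using n unfolding y_def by simp
  have x: "0 < x" using y unfolding x_def by auto
  have q: "0 \<le> q" unfolding q_def using y by simp
  have "real (n choose 3) * x = K"
    unfolding K_def x_def y_def real_choose_three using n by (simp add: field_simps)
  have "(1 + x) ^ (n choose 3) = exp (real (n choose 3) * ln (1 + x))"
    using x by (simp add: exp_of_nat_mult)
  also have "\<dots> \<le> exp (real (n choose 3) * (x - x^2/2 + x^3/3))"
    using ln_add_one_le_cubic[of x] x by (subst exp_le_cancel_iff) (intro mult_left_mono; auto)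
  also have "real (n choose 3) * (x - x^2/2 + x^3/3) = K - K * x / 2 + K * x^2 / 3"
    using \<open>real (n choose 3) * x = K\<close> by (simp add: algebra_simps power2_eq_square power3_eq_cube)
  finally have "(1 + x) ^ (n choose 3) \<le> exp (K - K * x / 2 + K * x^2 / 3)" .
  moreover have "(1 + q) ^ n \<le> exp (1/4)"
  proof -
    have "(1 + q) ^ n \<le> exp q ^ n" by (intro power_mono) (use q in \<open>auto simp: add.commute exp_ge_add_one_self\<close>)
    also have "\<dots> = exp (real n * q)" by (simp add: exp_of_nat_mult)
    also have "\<dots> \<le> exp (1/4)"
      using label_weight_le[OF n] unfolding q_def y_def by (simp add: mult.assoc)
    finally show ?thesis .
  qed
  moreover have "5/4 \<le> K * x / 2 - K * x^2 / 3"
  proof -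
    have "K * x / 2 - K * x^2 / 3 = K * x * (1/2 - x/3)" by (simp add: algebra_simps power2_eq_square)
    then show ?thesis using cubic_correction_ge[OF y] unfolding K_def x_def by simp
  qed
  ultimately have "(1 + x) ^ (n choose 3) * (1 + q) ^ n \<le> exp (K - K * x / 2 + K * x^2 / 3) * exp (1/4)"
    using q by (intro mult_mono) auto
  also have "\<dots> \<le> exp (K - 1)"
    using \<open>5/4 \<le> K * x / 2 - K * x^2 / 3\<close> by (simp add: exp_add[symmetric])
  finally show ?thesis unfolding x_def q_def K_def y_def .
qed

lemma ln_card_rank_matroids_3_le:
  fixes E :: "'a::wellorder set"
  assumes E: "finite E" "card E = n" and n: "15 \<le> n"
  shows "ln (real (card (rank_matroids E 3) + 1))
         \<le> real (n choose 3) / real (n - 2) * ln (exp 1 * real (n - 2))"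
proof -
  define K where "K = real n * (real n - 1) / 6"
  define P where "P = (real n - 2) powr K"
  have n2: "real (n - 2) = real n - 2" using n by (simp add: of_nat_diff)
  have "15 * 14 \<le> real n * (real n - 1)" using mult_mono[of 15 "real n" 14 "real n - 1"] n by simp
  then have K: "1 \<le> K" "K = real (n choose 3) / real (n - 2)"
    using n unfolding K_def n2 real_choose_three by (auto simp: field_simps)
  have P: "1 \<le> P" unfolding P_def using n K(1) by (intro ge_one_powr_ge_zero) auto
  have "real (card (rank_matroids E 3)) \<le> real (card (rank3_codes E))"
    using card_rank_matroids_3_le_codes[OF E(1)] by simp
  also have "\<dots> \<le> (1 + 1 / (real n - 2)) ^ (n choose 3)
      * (1 + (real n + 1) * (real n - 2) powr (- (real n + 2) / 6)) ^ n * P"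
    using card_rank3_codes_le[OF E n] unfolding P_def K_def by (simp add: ac_simps)
  also have "\<dots> \<le> exp (K - 1) * P"
    using code_factors_le[OF n] P unfolding K_def by (intro mult_right_mono) auto
  finally have "real (card (rank_matroids E 3)) \<le> exp (K - 1) * P" .
  then have "real (card (rank_matroids E 3) + 1) \<le> exp (K - 1) * P + 1" by simp
  also have "\<dots> \<le> exp K * P"
  proof -
    have "exp (K - 1) * 2 \<le> exp (K - 1) * exp 1"
      using exp_ge_add_one_self[of 1] by (intro mult_left_mono) auto
    moreover have "1 \<le> exp (K - 1)" using K(1) by simp
    moreover have "exp (K - 1) * exp 1 = exp K" by (simp add: exp_add[symmetric])
    ultimately have "exp (K - 1) + 1 \<le> exp K" by linarith
    then have "(exp (K - 1) + 1) * P \<le> exp K * P" using P by (intro mult_right_mono) auto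
    then show ?thesis using P by (simp add: algebra_simps)
  qed
  finally have "ln (real (card (rank_matroids E 3) + 1)) \<le> ln (exp K * P)"
    using P by (subst ln_le_cancel_iff) auto
  also have "\<dots> = K * ln (exp 1 * real (n - 2))"
    unfolding P_def n2 using n by (simp add: ln_mult ln_powr distrib_left)
  finally show ?thesis unfolding K(2) .
qed

lemma ln_card_rank_matroids_le:
  fixes E :: "'a::wellorder set"
  assumes r: "3 \<le> r" and E: "finite E" "card E = r + c" and c: "12 \<le> c"
  shows "ln (real (card (rank_matroids E r) + 1))
         \<le> real ((r + c) choose r) / real (c + 1) * ln (exp 1 * real (c + 1))"
  using r E
proof (induction r arbitrary: E rule: dec_induct)
  case base
  then show ?case using ln_card_rank_matroids_3_le[of E "3 + c"] c by (simp add: numeral_eq_Suc)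
next
  case (step r)
  let ?L = "real ((r + c) choose r) / real (c + 1) * ln (exp 1 * real (c + 1))"
  have "real (Suc r) * ln (real (card (rank_matroids E (Suc r)) + 1))
      = ln (real (card (rank_matroids E (Suc r)) + 1) ^ Suc r)"
    by (rule ln_realpow[symmetric])
  also have "\<dots> \<le> ln (\<Prod>x\<in>E. real (card (rank_matroids (E - {x}) r) + 1))"
    using card_rank_matroids_power_le[OF step.prems(1), of "Suc r"]
    by (subst ln_le_cancel_iff) (auto intro: prod_pos)
  also have "\<dots> = (\<Sum>x\<in>E. ln (real (card (rank_matroids (E - {x}) r) + 1)))"
    by (rule ln_prod) (use step.prems(1) in auto)
  also have "\<dots> \<le> (\<Sum>x\<in>E. ?L)"
    using step.IH step.prems by (intro sum_mono) simp
  also have "\<dots> = real (Suc r) * (real ((Suc r + c) choose Suc r) / real (c + 1) * ln (exp 1 * real (c + 1)))"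
  proof -
    have "real (Suc r + c) * real ((r + c) choose r) = real (Suc r) * real ((Suc r + c) choose Suc r)"
      using Suc_times_binomial_eq[of "r + c" r] by (simp only: of_nat_mult[symmetric]) (simp add: mult.commute)
    then show ?thesis using step.prems(2) by (simp add: mult.assoc[symmetric])
  qed
  finally show ?case by (subst (asm) mult_le_cancel_left_pos) auto
qed

theorem theorem1p5:
  fixes n r :: nat
  assumes "r \<ge> 3" and "n \<ge> r + 12"
  shows "log 2 (real (matroid_count n r))
           \<le> (1 / real (n - r + 1)) * real (n choose r) * log 2 (exp 1 * real (n - r + 1))"
proof -
  define m where "m = matroid_count n r"
  have "log 2 (real m) \<le> log 2 (real m + 1)" \<comment> \<open>also for \<open>m = 0\<close>, as \<open>log 2 0 = 0\<close>\<close>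
    by (cases "m = 0") (simp_all add: log_def divide_right_mono)
  also have "\<dots> = ln (real m + 1) / ln 2" by (simp add: log_def)
  also have "\<dots> \<le> real (n choose r) / real (n - r + 1) * ln (exp 1 * real (n - r + 1)) / ln 2"
    using ln_card_rank_matroids_le[OF assms(1), of "{1..n}" "n - r"] assms(2)
    unfolding m_def matroid_count_eq_card by (intro divide_right_mono) (simp_all add: add.commute)
  also have "\<dots> = (1 / real (n - r + 1)) * real (n choose r) * log 2 (exp 1 * real (n - r + 1))"
    by (simp add: log_def)
  finally show ?thesis unfolding m_def .
qed

end
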